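(* Let $X$ be a proper geodesic metric space, $Y$ a compact metric space, and $f:X\to Y$ a continuous map. Then $f$ extends to a continuous map $\bar f:h_0X\to Y$ if and only if $f$ is uniformly continuous.
   Context: The $C_0$ coarse structure on a metric space $(X,d)$ consists of all sets $E\subset X\times X$ such that for every $\epsilon>0$ there is a compact $K\subset X$ with $d(x,y)<\epsilon$ for all $(x,y)\in E\setminus(K\times K)$ (controlled sets). A bounded continuous $f:X\to\mathbb{C}$ is a Higson function if for every controlled set $E$ the function $(x,y)\mapsto f(x)-f(y)$ restricted to $E$ vanishes at infinity; $C_{h_0}(X)$ denotes the algebra of bounded continuous Higson functions. The $C_0$ Higson compactification $h_0X$ is the compactification of $X$ with $C(h_0X)=C_{h_0}(X)$ (i.e., exactly the bounded continuous functions on $X$ lying in $C_{h_0}(X)$ extend continuously to $h_0X$); $\nu_0X=h_0X\setminus X$ is the $C_0$ Higson corona. Uniformly continuous: there is a monotone $\omega$ with $\omega(t)\to0$ as $t\to0$ and $d(f(x),f(x'))\le\omega(d(x,x'))$. *)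

theory Defs
  imports "HOL-Analysis.Analysis"
begin

definition proper_metric :: "'a::metric_space itself \<Rightarrow> bool" where
  "proper_metric _ \<longleftrightarrow> (\<forall>(x::'a) r. compact (cball x r))"

definition geodesic_metric :: "'a::metric_space itself \<Rightarrow> bool" where
  "geodesic_metric _ \<longleftrightarrow> (\<forall>(x::'a) y. \<exists>g :: real \<Rightarrow> 'a.
      g 0 = x \<and> g (dist x y) = y \<and>
      (\<forall>s\<in>{0..dist x y}. \<forall>t\<in>{0..dist x y}. dist (g s) (g t) = \<bar>s - t\<bar>))"

definition C0_controlled :: "('a::metric_space \<times> 'a) set \<Rightarrow> bool" where
  "C0_controlled E \<longleftrightarrow> (\<forall>\<epsilon>>0. \<exists>K. compact K \<and>
      (\<forall>(x,y)\<in>E - (K \<times> K). dist x y < \<epsilon>))"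

definition vanishes_at_infinity_on :: "('a::metric_space \<times> 'a) set \<Rightarrow> ('a \<times> 'a \<Rightarrow> complex) \<Rightarrow> bool" where
  "vanishes_at_infinity_on E g \<longleftrightarrow> (\<forall>\<epsilon>>0. \<exists>C. compact C \<and>
      (\<forall>p\<in>E - C. norm (g p) < \<epsilon>))"

definition C_h0 :: "('a::metric_space \<Rightarrow> complex) set" where
  "C_h0 = {f. continuous_on UNIV f \<and> bounded (range f) \<and>
      (\<forall>E. C0_controlled E \<longrightarrow> vanishes_at_infinity_on E (\<lambda>(x,y). f x - f y))}"

definition is_C0_Higson_compactification :: "'c topology \<Rightarrow> ('a::metric_space \<Rightarrow> 'c) \<Rightarrow> bool" where
  "is_C0_Higson_compactification K e \<longleftrightarrow>
     compact_space K \<and> Hausdorff_space K \<and>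
     e ` UNIV \<subseteq> topspace K \<and>
     homeomorphic_map euclidean (subtopology K (range e)) e \<and>
     K closure_of (range e) = topspace K \<and>
     {g \<circ> e | g. continuous_map K euclidean (g :: 'c \<Rightarrow> complex)} = C_h0"

end

theory Submission
  imports Defs
begin

(* Idea of the proof.  For a continuous map f from X into a compact metric space Y, both
   sides of the equivalence are characterised by the distance functions
   x \<mapsto> d(f x, y), y \<in> Y:

   (1) A uniformly continuous bounded function is a C_0 Higson function, so if f is
       uniformly continuous, every distance function d(f -, y) lies in C_h0(X).
   (2) Conversely, if every d(f -, y) is a Higson function then f is uniformly continuous:
       a failure of uniform continuity gives pairs (a_n, b_n) with d(a_n, b_n) \<rightarrow> 0 but
       d(f a_n, f b_n) \<ge> \<epsilon>; these pairs form a controlled set, so the Higson property of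
       d(f -, y) with y = lim f a_n pushes them into a compact set, where f is uniformly
       continuous -- a contradiction.
   (3) If f extends to F : h_0X \<rightarrow> Y, then d(f -, y) = d(F -, y) \<circ> e lies in C_h0(X).
   (4) If every d(f -, y) extends to a continuous \<phi>_y on h_0X, then by density the \<phi>_y
       satisfy the axioms of the distance functions to a point; at each k the point is
       found by compactness of Y, and k \<mapsto> that point is the required extension F
       (locale distance_extension). *)

definition dist_to :: "('a \<Rightarrow> 'b::metric_space) \<Rightarrow> 'b \<Rightarrow> 'a \<Rightarrow> complex" where
  "dist_to f y = (\<lambda>x. complex_of_real (dist (f x) y))"

lemma continuous_map_le_on_dense:
  fixes p q :: "'c \<Rightarrow> real"
  assumes p: "continuous_map K euclidean p" and q: "continuous_map K euclidean q"
    and dense: "K closure_of D = topspace K" and D: "D \<subseteq> topspace K"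
    and le: "\<And>z. z \<in> D \<Longrightarrow> p z \<le> q z" and k: "k \<in> topspace K"
  shows "p k \<le> q k"
proof -
  let ?S = "{z \<in> topspace K. q z - p z \<in> {0..}}"
  have "continuous_map K euclidean (\<lambda>z. q z - p z)"
    using p q by (intro continuous_map_diff)
  then have "closedin K ?S"
    by (rule closedin_continuous_map_preimage) auto
  moreover have "D \<subseteq> ?S"
    using D le by auto
  ultimately have "K closure_of D \<subseteq> ?S"
    by (rule closure_of_minimal[rotated])
  then show ?thesis
    using dense k by auto
qed

lemma C0_Higson_compactification_extends:
  fixes K :: "'c topology" and e :: "'a::metric_space \<Rightarrow> 'c"
  assumes "is_C0_Higson_compactification K e"
  shows "h \<in> C_h0 \<longleftrightarrow> (\<exists>g. continuous_map K euclidean g \<and> h = g \<circ> e)"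
proof -
  have "C_h0 = {g \<circ> e | g. continuous_map K euclidean (g :: 'c \<Rightarrow> complex)}"
    using assms unfolding is_C0_Higson_compactification_def by (elim conjE) (erule sym)
  then show ?thesis
    by auto
qed

section \<open>Uniform continuity and Higson functions\<close>

lemma uniformly_continuous_bounded_in_C_h0:
  fixes h :: "'a::metric_space \<Rightarrow> complex"
  assumes uc: "uniformly_continuous_on UNIV h" and bd: "bounded (range h)"
  shows "h \<in> C_h0"
proof -
  have "vanishes_at_infinity_on E (\<lambda>(x,y). h x - h y)" if E: "C0_controlled E" for E
    unfolding vanishes_at_infinity_on_def
  proof (intro allI impI)
    fix \<epsilon> :: real
    assume "\<epsilon> > 0"
    then obtain \<delta> where "\<delta> > 0" and \<delta>: "\<And>x x'. dist x' x < \<delta> \<Longrightarrow> dist (h x') (h x) < \<epsilon>"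
      using uc unfolding uniformly_continuous_on_def by blast
    obtain C where C: "compact C" "\<forall>(x,y)\<in>E - (C \<times> C). dist x y < \<delta>"
      using E \<open>\<delta> > 0\<close> unfolding C0_controlled_def by blast
    show "\<exists>C'. compact C' \<and> (\<forall>p\<in>E - C'. norm ((\<lambda>(x,y). h x - h y) p) < \<epsilon>)"
    proof (intro exI[of _ "C \<times> C"] conjI ballI)
      show "compact (C \<times> C)"
        using C(1) by (rule compact_Times[OF _ C(1)])
      fix p
      assume p: "p \<in> E - C \<times> C"
      obtain x y where xy: "p = (x, y)"
        by fastforce
      then have "dist x y < \<delta>"
        using C(2) p by auto
      then show "norm ((\<lambda>(x,y). h x - h y) p) < \<epsilon>"
        using \<delta>[of x y] xy by (simp add: dist_norm)
    qed
  qed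
  then show ?thesis
    using uniformly_continuous_imp_continuous[OF uc] bd unfolding C_h0_def mem_Collect_eq by blast
qed

lemma uniformly_continuous_imp_dist_to_C_h0:
  fixes f :: "'a::metric_space \<Rightarrow> 'b::metric_space"
  assumes uc: "uniformly_continuous_on UNIV f" and bd: "bounded (range f)"
  shows "dist_to f y \<in> C_h0"
proof (rule uniformly_continuous_bounded_in_C_h0)
  show "uniformly_continuous_on UNIV (dist_to f y)"
    unfolding dist_to_def
    by (intro bounded_linear.uniformly_continuous_on[OF bounded_linear_of_real]
        uniformly_continuous_on_dist uc uniformly_continuous_on_const)
  obtain B where "\<forall>z\<in>range f. dist y z \<le> B"
    using bd bounded_any_center by blast
  then show "bounded (range (dist_to f y))"
    unfolding bounded_iff dist_to_def by (auto simp: dist_commute)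
qed

lemma C0_controlled_null_pairs:
  assumes null: "(\<lambda>n. dist (a n) (b n)) \<longlonglongrightarrow> 0"
  shows "C0_controlled (range (\<lambda>n. (a n, b n)))"
  unfolding C0_controlled_def
proof (intro allI impI)
  fix \<delta> :: real
  assume "\<delta> > 0"
  then obtain N where N: "\<And>n. n \<ge> N \<Longrightarrow> dist (a n) (b n) < \<delta>"
    using order_tendstoD(2)[OF null] unfolding eventually_sequentially by blast
  let ?C = "a ` {..<N} \<union> b ` {..<N}"
  have "compact ?C"
    by (intro finite_imp_compact) auto
  moreover have "dist (a n) (b n) < \<delta>" if "(a n, b n) \<notin> ?C \<times> ?C" for n
  proof -
    have "\<not> n < N"
      using that by auto
    then show ?thesis
      using N by simp
  qed
  then have "\<forall>(x,y)\<in>range (\<lambda>n. (a n, b n)) - (?C \<times> ?C). dist x y < \<delta>"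
    by auto
  ultimately show "\<exists>C. compact C \<and> (\<forall>(x,y)\<in>range (\<lambda>n. (a n, b n)) - (C \<times> C). dist x y < \<delta>)"
    by blast
qed

lemma not_uniformly_continuous_witness:
  fixes f :: "'a::metric_space \<Rightarrow> 'b::metric_space"
  assumes "\<not> uniformly_continuous_on UNIV f" and Y: "compact Y" "range f \<subseteq> Y"
  obtains \<epsilon> a b y where "\<epsilon> > 0" "(\<lambda>n. dist (a n) (b n)) \<longlonglongrightarrow> 0"
    "\<And>n. \<epsilon> \<le> dist (f (a n)) (f (b n))" "(\<lambda>n. f (a n)) \<longlonglongrightarrow> y" "y \<in> Y"
proof -
  obtain \<epsilon> where "\<epsilon> > 0" and \<epsilon>: "\<And>d. d > 0 \<Longrightarrow> \<exists>x x'. dist x' x < d \<and> \<not> dist (f x') (f x) < \<epsilon>"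
    using assms(1) unfolding uniformly_continuous_on_def by auto
  have "\<forall>n. \<exists>x x'. dist x' x < inverse (real (Suc n)) \<and> \<not> dist (f x') (f x) < \<epsilon>"
    using \<epsilon> by simp
  then obtain a0 b0 where close: "\<And>n. dist (a0 n) (b0 n) < inverse (real (Suc n))"
    and far: "\<And>n. \<epsilon> \<le> dist (f (a0 n)) (f (b0 n))"
    by (metis dist_commute not_less)
  have null: "(\<lambda>n. dist (a0 n) (b0 n)) \<longlonglongrightarrow> 0"
  proof (rule Lim_null_comparison[OF always_eventually LIMSEQ_inverse_real_of_nat], intro allI)
    fix n
    show "norm (dist (a0 n) (b0 n)) \<le> inverse (real (Suc n))"
      using close[of n] by simp
  qed
  have "\<forall>n. f (a0 n) \<in> Y"
    using Y(2) by auto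
  then obtain y r where "y \<in> Y" "strict_mono r" "((\<lambda>n. f (a0 n)) \<circ> r) \<longlonglongrightarrow> y"
    by (rule seq_compactE[OF compact_imp_seq_compact[OF Y(1)]])
  moreover have "((\<lambda>n. dist (a0 n) (b0 n)) \<circ> r) \<longlonglongrightarrow> 0"
    using LIMSEQ_subseq_LIMSEQ[OF null \<open>strict_mono r\<close>] .
  ultimately show thesis
    using \<open>\<epsilon> > 0\<close> far by (intro that[of \<epsilon> "a0 \<circ> r" "b0 \<circ> r" y]) (simp_all add: o_def)
qed

lemma dist_to_C_h0_imp_uniformly_continuous:
  fixes f :: "'a::metric_space \<Rightarrow> 'b::metric_space"
  assumes cont: "continuous_on UNIV f" and Y: "compact Y" "range f \<subseteq> Y"
    and higson: "\<And>y. y \<in> Y \<Longrightarrow> dist_to f y \<in> C_h0"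
  shows "uniformly_continuous_on UNIV f"
proof (rule ccontr)
  assume not_uc: "\<not> uniformly_continuous_on UNIV f"
  obtain \<epsilon> a b y where "\<epsilon> > 0" and null: "(\<lambda>n. dist (a n) (b n)) \<longlonglongrightarrow> 0"
    and far: "\<And>n. \<epsilon> \<le> dist (f (a n)) (f (b n))" and lim: "(\<lambda>n. f (a n)) \<longlonglongrightarrow> y"
    and "y \<in> Y"
    by (rule not_uniformly_continuous_witness[OF not_uc Y]) (rule that)
  have "vanishes_at_infinity_on (range (\<lambda>n. (a n, b n))) (\<lambda>(x,x'). dist_to f y x - dist_to f y x')"
    using higson[OF \<open>y \<in> Y\<close>] C0_controlled_null_pairs[OF null] unfolding C_h0_def by blast
  moreover have "\<epsilon>/4 > 0"
    using \<open>\<epsilon> > 0\<close> by simp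
  ultimately obtain C where "compact C" and small: "\<forall>p\<in>range (\<lambda>n. (a n, b n)) - C.
      norm ((\<lambda>(x,x'). dist_to f y x - dist_to f y x') p) < \<epsilon>/4"
    unfolding vanishes_at_infinity_on_def by blast
  (* Far-apart images with f a_n near y force the pair (a_n, b_n) into C. *)
  have in_C: "eventually (\<lambda>n. (a n, b n) \<in> C) sequentially"
  proof -
    have "eventually (\<lambda>n. dist (f (a n)) y < \<epsilon>/4) sequentially"
      using lim \<open>\<epsilon>/4 > 0\<close> by (rule tendstoD)
    moreover have "(a n, b n) \<in> C" if "dist (f (a n)) y < \<epsilon>/4" for n
    proof (rule ccontr)
      assume "(a n, b n) \<notin> C"
      then have "\<bar>dist (f (a n)) y - dist (f (b n)) y\<bar> < \<epsilon>/4"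
        using small[rule_format, of "(a n, b n)"] by (simp add: dist_to_def flip: of_real_diff)
      moreover have "dist (f (a n)) (f (b n)) \<le> dist (f (a n)) y + dist (f (b n)) y"
        by (rule dist_triangle2)
      ultimately show False
        using that far[of n] by linarith
    qed
    ultimately show ?thesis
      by (rule eventually_mono)
  qed
  obtain \<delta> where "\<delta> > 0" and \<delta>: "\<And>x x'. x \<in> fst ` C \<union> snd ` C \<Longrightarrow>
      x' \<in> fst ` C \<union> snd ` C \<Longrightarrow> dist x' x < \<delta> \<Longrightarrow> dist (f x') (f x) < \<epsilon>"
  proof -
    have "compact (fst ` C \<union> snd ` C)"
      using \<open>compact C\<close> by (intro compact_Un compact_continuous_image continuous_intros)
    then have "uniformly_continuous_on (fst ` C \<union> snd ` C) f"
      using cont by (intro compact_uniformly_continuous) (auto intro: continuous_on_subset)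
    then show thesis
      by (rule uniformly_continuous_onE[OF _ \<open>\<epsilon> > 0\<close>]) (rule that)
  qed
  have "eventually (\<lambda>n. (a n, b n) \<in> C \<and> dist (a n) (b n) < \<delta>) sequentially"
    using in_C order_tendstoD(2)[OF null \<open>\<delta> > 0\<close>] by (rule eventually_conj)
  then obtain n where "(a n, b n) \<in> C" and "dist (a n) (b n) < \<delta>"
    unfolding eventually_sequentially by (meson order_refl)
  moreover have "a n \<in> fst ` C" "b n \<in> snd ` C"
    using \<open>(a n, b n) \<in> C\<close> by force+
  ultimately have "dist (f (a n)) (f (b n)) < \<epsilon>"
    using \<delta>[of "b n" "a n"] by blast
  then show False
    using far[of n] by simp
qed

section \<open>Extensions to the compactification and distance functions\<close>

lemma extension_imp_dist_to_C_h0: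
  fixes f :: "'a::metric_space \<Rightarrow> 'b::metric_space"
  assumes H: "is_C0_Higson_compactification K e"
    and F: "continuous_map K (top_of_set Y) F" and Fe: "\<And>x. F (e x) = f x"
  shows "dist_to f y \<in> C_h0"
proof -
  have "continuous_map K euclidean ((\<lambda>z. complex_of_real (dist z y)) \<circ> F)"
    by (rule continuous_map_compose[OF continuous_map_into_fulltopology[OF F]])
      (simp add: continuous_intros)
  moreover have "dist_to f y = ((\<lambda>z. complex_of_real (dist z y)) \<circ> F) \<circ> e"
    by (auto simp: dist_to_def Fe)
  ultimately show ?thesis
    using C0_Higson_compactification_extends[OF H, of "dist_to f y"] by blast
qed

(* Step (4): continuous functions \<phi> y on a space K, agreeing on the dense image of e with
   the distance functions d(f -, y) for a map f into a compact space Y, are themselves the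
   distance functions of a continuous map K \<rightarrow> Y extending f. *)
locale distance_extension =
  fixes K :: "'c topology" and e :: "'a \<Rightarrow> 'c"
    and Y :: "'b::metric_space set" and f :: "'a \<Rightarrow> 'b"
    and \<phi> :: "'b \<Rightarrow> 'c \<Rightarrow> real"
  assumes dense: "K closure_of range e = topspace K"
    and range_e: "range e \<subseteq> topspace K"
    and compact_Y: "compact Y" and range_f: "range f \<subseteq> Y"
    and continuous_\<phi>: "\<And>y. continuous_map K euclidean (\<phi> y)"
    and \<phi>_e: "\<And>y x. \<phi> y (e x) = dist (f x) y"
begin

lemma le_by_density:
  fixes p q :: "'c \<Rightarrow> real"
  assumes "continuous_map K euclidean p" "continuous_map K euclidean q"
    and "\<And>x. p (e x) \<le> q (e x)" and "k \<in> topspace K"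
  shows "p k \<le> q k"
  using continuous_map_le_on_dense[OF assms(1,2) dense range_e] assms(3,4) by auto

lemma phi_nonneg: "k \<in> topspace K \<Longrightarrow> 0 \<le> \<phi> y k"
  by (rule le_by_density) (auto simp: continuous_\<phi> \<phi>_e)

lemma phi_lipschitz: "k \<in> topspace K \<Longrightarrow> \<phi> y k \<le> \<phi> y' k + dist y y'"
  by (rule le_by_density)
    (auto intro: continuous_map_add continuous_\<phi> simp: \<phi>_e dist_triangle2)

lemma phi_triangle: "k \<in> topspace K \<Longrightarrow> dist y y' \<le> \<phi> y k + \<phi> y' k"
  by (rule le_by_density)
    (auto intro: continuous_map_add continuous_\<phi> simp: \<phi>_e dist_triangle3)

(* At every k some point of Y is arbitrarily \<phi>-close to k: otherwise a finite
   \<delta>/2-net of Y yields a neighbourhood of k missing the dense set range e. *)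
lemma phi_small:
  assumes k: "k \<in> topspace K" and "\<delta> > 0"
  shows "\<exists>y\<in>Y. \<phi> y k < \<delta>"
proof (rule ccontr)
  assume far: "\<not> ?thesis"
  obtain T where T: "T \<subseteq> Y" "finite T" "Y \<subseteq> (\<Union>t\<in>T. ball t (\<delta>/2))"
    using compactE_image[OF compact_Y, of Y "\<lambda>t. ball t (\<delta>/2)"] \<open>\<delta> > 0\<close> by force
  define U where "U = (\<Inter>t\<in>T. {k \<in> topspace K. \<phi> t k \<in> {\<delta>/2<..}}) \<inter> topspace K"
  have "openin K U"
    unfolding U_def by (intro openin_INT T(2) openin_continuous_map_preimage[OF continuous_\<phi>]) auto
  moreover have "k \<in> U"
  proof -
    have "\<delta>/2 < \<phi> t k" if "t \<in> T" for t
    proof -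
      have "\<not> \<phi> t k < \<delta>"
        using far T(1) that by blast
      then show ?thesis
        using \<open>\<delta> > 0\<close> by linarith
    qed
    then show ?thesis
      unfolding U_def using k by auto
  qed
  moreover have "k \<in> K closure_of range e"
    using dense k by simp
  ultimately obtain x where "e x \<in> U"
    unfolding in_closure_of by blast
  have "f x \<in> Y"
    using range_f by auto
  then obtain t where "t \<in> T" and "dist t (f x) < \<delta>/2"
    using T(3) by auto
  moreover have "\<delta>/2 < \<phi> t (e x)"
    using \<open>e x \<in> U\<close> \<open>t \<in> T\<close> unfolding U_def by simp
  ultimately show False
    by (simp add: \<phi>_e dist_commute)
qed

(* Hence \<phi> (-) k is exactly the distance function of a point of Y: its minimum over Y. *)
lemma phi_is_distance:
  assumes k: "k \<in> topspace K"
  shows "\<exists>y0\<in>Y. \<forall>y. \<phi> y k = dist y0 y"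
proof -
  have "dist (\<phi> y k) (\<phi> y' k) \<le> 1 * dist y y'" for y y'
    using phi_lipschitz[OF k, of y y'] phi_lipschitz[OF k, of y' y]
    by (simp add: dist_real_def abs_le_iff dist_commute)
  then have "continuous_on Y (\<lambda>y. \<phi> y k)"
    by (intro lipschitz_on_continuous_on[of 1] lipschitz_onI) auto
  moreover have "Y \<noteq> {}"
    using range_f by auto
  ultimately obtain y0 where "y0 \<in> Y" and min: "\<And>y. y \<in> Y \<Longrightarrow> \<phi> y0 k \<le> \<phi> y k"
    using continuous_attains_inf[OF compact_Y] by blast
  have "\<phi> y0 k = 0"
  proof (rule ccontr)
    assume "\<phi> y0 k \<noteq> 0"
    then have "\<phi> y0 k > 0"
      using phi_nonneg[OF k, of y0] by simp
    then obtain y where "y \<in> Y" "\<phi> y k < \<phi> y0 k"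
      using phi_small[OF k] by blast
    then show False
      using min[of y] by simp
  qed
  then have "\<phi> y k = dist y0 y" for y
    using phi_lipschitz[OF k, of y y0] phi_triangle[OF k, of y0 y] by (simp add: dist_commute)
  with \<open>y0 \<in> Y\<close> show ?thesis
    by blast
qed

definition extension :: "'c \<Rightarrow> 'b" where
  "extension k = (SOME y0. y0 \<in> Y \<and> (\<forall>y. \<phi> y k = dist y0 y))"

lemma extension:
  assumes "k \<in> topspace K"
  shows "extension k \<in> Y \<and> (\<forall>y. \<phi> y k = dist (extension k) y)"
proof -
  have "\<exists>y0. y0 \<in> Y \<and> (\<forall>y. \<phi> y k = dist y0 y)"
    using phi_is_distance[OF assms] by blast
  then show ?thesis
    unfolding extension_def by (rule someI_ex)
qed

lemma extension_e: "extension (e x) = f x"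
proof -
  have "e x \<in> topspace K"
    using range_e by auto
  then have "\<phi> (extension (e x)) (e x) = 0"
    using extension by simp
  then show ?thesis
    by (simp add: \<phi>_e)
qed

(* Continuity: near k, the \<phi>-distance to the point extension k is small, and that
   \<phi>-distance is the distance between the images. *)
lemma continuous_extension: "continuous_map K (top_of_set Y) extension"
  unfolding continuous_map_in_subtopology
proof
  have "\<exists>U. openin K U \<and> k \<in> U \<and> (\<forall>k'\<in>U. extension k' \<in> ball (extension k) \<epsilon>)"
    if "k \<in> topspace K" "\<epsilon> > 0" for k \<epsilon>
  proof (intro exI conjI)
    let ?U = "{k' \<in> topspace K. \<phi> (extension k) k' \<in> {..<\<epsilon>}}"
    show "openin K ?U"
      by (rule openin_continuous_map_preimage[OF continuous_\<phi>]) auto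
    show "k \<in> ?U"
      using extension that by auto
    show "\<forall>k'\<in>?U. extension k' \<in> ball (extension k) \<epsilon>"
      using extension by (auto simp: dist_commute)
  qed
  then show "continuous_map K euclidean extension"
    unfolding Met_TC.continuous_map_to_metric[unfolded mtopology_is_euclidean mball_eq_ball]
    by blast
  show "extension \<in> topspace K \<rightarrow> Y"
    using extension by auto
qed

end

lemma dist_to_C_h0_imp_extension:
  fixes f :: "'a::metric_space \<Rightarrow> 'b::metric_space"
  assumes H: "is_C0_Higson_compactification K e"
    and Y: "compact Y" "range f \<subseteq> Y" and higson: "\<And>y. dist_to f y \<in> C_h0"
  shows "\<exists>F. continuous_map K (top_of_set Y) F \<and> (\<forall>x. F (e x) = f x)"
proof -
  have "\<forall>y. \<exists>g. continuous_map K euclidean g \<and> dist_to f y = g \<circ> e"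
    using higson C0_Higson_compactification_extends[OF H] by blast
  then obtain g where g: "\<And>y. continuous_map K euclidean (g y)" "\<And>y. dist_to f y = g y \<circ> e"
    by metis
  interpret distance_extension K e Y f "\<lambda>y k. Re (g y k)"
  proof
    show "K closure_of range e = topspace K" "range e \<subseteq> topspace K"
      using H unfolding is_C0_Higson_compactification_def by auto
    show "continuous_map K euclidean (\<lambda>k. Re (g y k))" for y
      using continuous_map_compose[OF g(1)[of y], of euclidean Re]
      by (simp add: o_def continuous_on_Re continuous_on_id)
    show "Re (g y (e x)) = dist (f x) y" for y x
      using fun_cong[OF g(2)[of y], of x] unfolding dist_to_def o_def by (metis Re_complex_of_real)
  qed (use Y in auto)
  show ?thesis
    using continuous_extension extension_e by blast
qed

theorem corollary3p5:
  fixes K :: "'c topology" and e :: "'a::metric_space \<Rightarrow> 'c"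
    and Y :: "'b::metric_space set" and f :: "'a \<Rightarrow> 'b"
  assumes "proper_metric TYPE('a)" and "geodesic_metric TYPE('a)"
    and "is_C0_Higson_compactification K e"
    and "compact Y" and "f ` UNIV \<subseteq> Y" and "continuous_on UNIV f"
  shows "(\<exists>F. continuous_map K (top_of_set Y) F \<and> (\<forall>x. F (e x) = f x))
         \<longleftrightarrow> uniformly_continuous_on UNIV f"
proof
  assume "\<exists>F. continuous_map K (top_of_set Y) F \<and> (\<forall>x. F (e x) = f x)"
  then have "dist_to f y \<in> C_h0" for y
    using extension_imp_dist_to_C_h0[OF assms(3)] by blast
  then show "uniformly_continuous_on UNIV f"
    using dist_to_C_h0_imp_uniformly_continuous assms(4-6) by blast
next
  assume "uniformly_continuous_on UNIV f"
  moreover have "bounded (range f)"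
    using assms(4,5) compact_imp_bounded bounded_subset by blast
  ultimately show "\<exists>F. continuous_map K (top_of_set Y) F \<and> (\<forall>x. F (e x) = f x)"
    using dist_to_C_h0_imp_extension[OF assms(3-5)] uniformly_continuous_imp_dist_to_C_h0 by blast
qed

end
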